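(* Let $G$ be a group acting on a set $X$, let $A,B$ be nonempty finite subsets of $G$ and $Y$ a finite subset of $X$. Then \[|AB\cdot Y|^{2}\leq|AB|\,|B\cdot Y|\,\max_{b\in B}|Ab\cdot Y|.\] In particular, when every element of $A$ commutes with every element of $B$, \[|AB\cdot Y|^{2}\leq|AB|\,|B\cdot Y|\,|A\cdot Y|.\]
   Context: $AB=\{ab\mid a\in A,b\in B\}$, $Ab=\{ab\mid a\in A\}$, and for $S\subset G$, $S\cdot Y=\{s\cdot y\mid s\in S, y\in Y\}$. *)

theory Defs
  imports "HOL-Algebra.Group_Action"
begin

definition act_set :: "('a \<Rightarrow> 'b \<Rightarrow> 'b) \<Rightarrow> 'a set \<Rightarrow> 'b set \<Rightarrow> 'b set" where
  "act_set \<phi> S Y = {\<phi> s y | s y. s \<in> S \<and> y \<in> Y}"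

end

theory Submission
  imports Defs
begin

text \<open>
  Enumerate \<open>B = {b\<^sub>1, \<dots>, b\<^sub>n}\<close> and let \<open>D\<^sub>i\<close>, \<open>E\<^sub>i\<close>, \<open>F\<^sub>i\<close> be the parts of \<open>Ab\<^sub>i\<cdot>Y\<close>, \<open>Ab\<^sub>i\<close>
  and \<open>b\<^sub>i\<cdot>Y\<close> not already covered by the earlier \<open>b\<^sub>j\<close>. The \<open>D\<^sub>i\<close> partition \<open>AB\<cdot>Y\<close>, the \<open>E\<^sub>i\<close>
  partition \<open>AB\<close> and the \<open>F\<^sub>i\<close> partition \<open>B\<cdot>Y\<close>. Every point of \<open>D\<^sub>i\<close> is \<open>c b\<^sub>i\<^sup>-\<^sup>1\<cdot>w\<close> with
  \<open>c \<in> E\<^sub>i\<close> and \<open>w \<in> F\<^sub>i\<close>, so \<open>|D\<^sub>i| \<le> |E\<^sub>i| |F\<^sub>i|\<close>; trivially \<open>|D\<^sub>i| \<le> M = max\<^sub>b |Ab\<cdot>Y|\<close>. Hence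
  \<open>|D\<^sub>i| \<le> (M |E\<^sub>i| |F\<^sub>i|)\<^sup>1\<^sup>/\<^sup>2\<close>, and Cauchy-Schwarz gives
  \<open>|AB\<cdot>Y| = \<Sum>|D\<^sub>i| \<le> (M \<Sum>|E\<^sub>i| \<Sum>|F\<^sub>i|)\<^sup>1\<^sup>/\<^sup>2\<close>. If \<open>A\<close> commutes with \<open>B\<close>, then \<open>Ab\<cdot>Y = b\<cdot>(A\<cdot>Y)\<close> has the size
  of \<open>A\<cdot>Y\<close>.
\<close>

text \<open>The incremental form of Cauchy-Schwarz, avoiding square roots.\<close>
lemma cauchy_schwarz_step:
  fixes k d p q e f M :: nat
  assumes "k\<^sup>2 \<le> p * q * M" and "d \<le> e * f" and "d \<le> M"
  shows "(k + d)\<^sup>2 \<le> (p + e) * (q + f) * M"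
proof -
  have dd: "d * d \<le> M * (e * f)"
    using mult_le_mono[OF assms(3,2)] .
  have am_gm: "4 * ((e * q) * (f * p)) \<le> (e * q + f * p)\<^sup>2"
  proof -
    have "int (4 * ((e * q) * (f * p))) \<le> int ((e * q + f * p)\<^sup>2)"
      using sum_squares_ge_zero[of "int (e * q) - int (f * p)" 0]
      by (simp add: power2_eq_square algebra_simps)
    then show ?thesis by linarith
  qed
  have "(2 * k * d)\<^sup>2 = 4 * k\<^sup>2 * (d * d)"
    by (simp add: power2_eq_square)
  also have "\<dots> \<le> 4 * (p * q * M) * (M * (e * f))"
    using mult_le_mono[OF assms(1) dd] by simp
  also have "\<dots> = M\<^sup>2 * (4 * ((e * q) * (f * p)))"
    by (simp add: power2_eq_square algebra_simps)
  also have "\<dots> \<le> M\<^sup>2 * (e * q + f * p)\<^sup>2"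
    using am_gm by simp
  also have "\<dots> = (M * (e * q + f * p))\<^sup>2"
    by (simp add: power_mult_distrib)
  finally have "2 * k * d \<le> M * (e * q + f * p)"
    using power2_le_imp_le by blast
  then have "(k + d)\<^sup>2 \<le> k\<^sup>2 + M * (e * q + f * p) + M * (e * f)"
    using dd by (simp add: power2_eq_square algebra_simps)
  also have "\<dots> \<le> p * q * M + M * (e * q + f * p) + M * (e * f)"
    using assms(1) by simp
  also have "\<dots> = (p + e) * (q + f) * M"
    by (simp add: algebra_simps)
  finally show ?thesis .
qed

lemma card_Un_eq_card_add_card_Diff:
  "finite S \<Longrightarrow> finite T \<Longrightarrow> card (S \<union> T) = card S + card (T - S)"
  by (metis Un_Diff_cancel card_Un_disjoint Diff_disjoint finite_Diff)

lemma finite_act_set: "finite S \<Longrightarrow> finite Y \<Longrightarrow> finite (act_set \<phi> S Y)"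
proof -
  assume "finite S" "finite Y"
  have "act_set \<phi> S Y = (\<lambda>(s, y). \<phi> s y) ` (S \<times> Y)"
    unfolding act_set_def by auto
  with \<open>finite S\<close> \<open>finite Y\<close> show ?thesis by simp
qed

lemma act_set_Un: "act_set \<phi> (S \<union> T) Y = act_set \<phi> S Y \<union> act_set \<phi> T Y"
  unfolding act_set_def by auto

lemma set_mult_insert_right: "A <#>\<^bsub>G\<^esub> insert b C = (A <#>\<^bsub>G\<^esub> C) \<union> (A #>\<^bsub>G\<^esub> b)"
  unfolding set_mult_def r_coset_def by auto

lemma r_coset_eq_l_coset_if_commute:
  assumes "\<And>a. a \<in> A \<Longrightarrow> a \<otimes>\<^bsub>G\<^esub> b = b \<otimes>\<^bsub>G\<^esub> a"
  shows "A #>\<^bsub>G\<^esub> b = b <#\<^bsub>G\<^esub> A"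
  using assms unfolding r_coset_def l_coset_def by auto

context group_action
begin

lemma act_set_l_coset:
  assumes "b \<in> carrier G" and "A \<subseteq> carrier G" and "Y \<subseteq> E"
  shows "act_set \<phi> (b <# A) Y = \<phi> b ` act_set \<phi> A Y"
proof -
  have comp: "\<phi> (b \<otimes> a) y = \<phi> b (\<phi> a y)" if "a \<in> A" and "y \<in> Y" for a y
    using that assms by (intro composition_rule) auto
  show ?thesis
  proof (intro equalityI subsetI)
    fix z
    assume "z \<in> act_set \<phi> (b <# A) Y"
    then obtain a y where "a \<in> A" "y \<in> Y" "z = \<phi> (b \<otimes> a) y"
      unfolding act_set_def l_coset_def by auto
    then show "z \<in> \<phi> b ` act_set \<phi> A Y"
      unfolding act_set_def by (auto simp: comp)
  next
    fix z
    assume "z \<in> \<phi> b ` act_set \<phi> A Y"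
    then obtain a y where "a \<in> A" "y \<in> Y" "z = \<phi> (b \<otimes> a) y"
      unfolding act_set_def by (auto simp: comp)
    then show "z \<in> act_set \<phi> (b <# A) Y"
      unfolding act_set_def l_coset_def by blast
  qed
qed

lemma card_act_set_l_coset:
  assumes "b \<in> carrier G" and "A \<subseteq> carrier G" and "Y \<subseteq> E"
  shows "card (act_set \<phi> (b <# A) Y) = card (act_set \<phi> A Y)"
proof -
  have "act_set \<phi> A Y \<subseteq> E"
    using assms(2,3) unfolding act_set_def by (auto intro: element_image[OF _ _ refl])
  then have "inj_on (\<phi> b) (act_set \<phi> A Y)"
    using inj_prop[OF assms(1)] inj_on_subset by blast
  then show ?thesis
    by (simp add: act_set_l_coset[OF assms] card_image)
qed

text \<open>
  A point \<open>(a \<otimes> b)\<cdot>y\<close> that is new relative to \<open>A C\<cdot>Y\<close> has both \<open>a \<otimes> b \<notin> A C\<close> and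
  \<open>b\<cdot>y \<notin> C\<cdot>Y\<close>, since \<open>b\<cdot>y = c\<cdot>y'\<close> would give \<open>(a \<otimes> b)\<cdot>y = (a \<otimes> c)\<cdot>y'\<close>.
\<close>
lemma act_set_r_coset_Diff_subset:
  assumes A: "A \<subseteq> carrier G" and C: "C \<subseteq> carrier G" and b: "b \<in> carrier G"
    and Y: "Y \<subseteq> E"
  shows "act_set \<phi> (A #> b) Y - act_set \<phi> (A <#> C) Y
           \<subseteq> (\<lambda>(c, w). \<phi> c (\<phi> (inv b) w))
               ` (((A #> b) - (A <#> C)) \<times> (act_set \<phi> {b} Y - act_set \<phi> C Y))"
proof
  fix z
  assume z: "z \<in> act_set \<phi> (A #> b) Y - act_set \<phi> (A <#> C) Y"
  then obtain a y where a: "a \<in> A" and y: "y \<in> Y" and z_eq: "z = \<phi> (a \<otimes> b) y"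
    unfolding act_set_def r_coset_def by auto
  have aG: "a \<in> carrier G" and yE: "y \<in> E"
    using a y A Y by auto
  have z_split: "z = \<phi> a (\<phi> b y)"
    using z_eq composition_rule[OF yE aG b] by simp
  have "a \<otimes> b \<notin> A <#> C"
    using z z_eq y unfolding act_set_def by auto
  then have new_elem: "a \<otimes> b \<in> (A #> b) - (A <#> C)"
    using a unfolding r_coset_def by auto
  have "\<phi> b y \<notin> act_set \<phi> C Y"
  proof
    assume "\<phi> b y \<in> act_set \<phi> C Y"
    then obtain c y' where c: "c \<in> C" and y': "y' \<in> Y" and "\<phi> b y = \<phi> c y'"
      unfolding act_set_def by auto
    moreover have "\<phi> (a \<otimes> c) y' = \<phi> a (\<phi> c y')"
      using composition_rule aG c y' C Y by blast
    ultimately have "z = \<phi> (a \<otimes> c) y'"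
      using z_split by simp
    then have "z \<in> act_set \<phi> (A <#> C) Y"
      using a c y' unfolding act_set_def set_mult_def by blast
    with z show False by simp
  qed
  then have new_point: "\<phi> b y \<in> act_set \<phi> {b} Y - act_set \<phi> C Y"
    using y unfolding act_set_def by auto
  have "z = (\<lambda>(c, w). \<phi> c (\<phi> (inv b) w)) (a \<otimes> b, \<phi> b y)"
    using z_eq orbit_sym_aux[OF b yE refl] by simp
  with new_elem new_point show "z \<in> (\<lambda>(c, w). \<phi> c (\<phi> (inv b) w))
      ` (((A #> b) - (A <#> C)) \<times> (act_set \<phi> {b} Y - act_set \<phi> C Y))"
    by blast
qed

lemma card_act_set_r_coset_Diff_le:
  assumes "A \<subseteq> carrier G" and "C \<subseteq> carrier G" and "b \<in> carrier G" and "Y \<subseteq> E"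
    and "finite A" and "finite Y"
  shows "card (act_set \<phi> (A #> b) Y - act_set \<phi> (A <#> C) Y)
           \<le> card ((A #> b) - (A <#> C)) * card (act_set \<phi> {b} Y - act_set \<phi> C Y)"
proof -
  let ?P = "((A #> b) - (A <#> C)) \<times> (act_set \<phi> {b} Y - act_set \<phi> C Y)"
  have "finite (A #> b)"
    using \<open>finite A\<close> unfolding r_coset_def by auto
  moreover have "finite (act_set \<phi> {b} Y)"
    using \<open>finite Y\<close> by (simp add: finite_act_set)
  ultimately have "finite ?P"
    by auto
  then have "card (act_set \<phi> (A #> b) Y - act_set \<phi> (A <#> C) Y)
               \<le> card ((\<lambda>(c, w). \<phi> c (\<phi> (inv b) w)) ` ?P)"
    by (intro card_mono act_set_r_coset_Diff_subset assms) auto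
  also have "\<dots> \<le> card ?P"
    by (rule card_image_le) fact
  finally show ?thesis
    by (simp add: card_cartesian_product)
qed

lemma card_act_set_set_mult_square_le:
  assumes A: "A \<subseteq> carrier G" and B: "B \<subseteq> carrier G" and Y: "Y \<subseteq> E"
    and "finite A" and "finite B" and "finite Y"
    and M: "\<And>b. b \<in> B \<Longrightarrow> card (act_set \<phi> (A #> b) Y) \<le> M"
  shows "card (act_set \<phi> (A <#> B) Y) ^ 2 \<le> card (A <#> B) * card (act_set \<phi> B Y) * M"
  using \<open>finite B\<close> B M
proof (induction B rule: finite_induct)
  case empty
  then show ?case
    by (simp add: set_mult_def act_set_def)
next
  case (insert b C)
  have b: "b \<in> carrier G" and C: "C \<subseteq> carrier G"
    using insert.prems(1) by auto
  let ?K = "act_set \<phi> (A <#> C) Y" and ?V = "act_set \<phi> (A #> b) Y"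
  have fin_AC: "finite (A <#> C)"
    using \<open>finite A\<close> \<open>finite C\<close> unfolding set_mult_def by auto
  have fin_Ab: "finite (A #> b)"
    using \<open>finite A\<close> unfolding r_coset_def by auto
  have card_AY: "card (act_set \<phi> (A <#> insert b C) Y) = card ?K + card (?V - ?K)"
    unfolding set_mult_insert_right act_set_Un
    using fin_AC fin_Ab \<open>finite Y\<close> by (simp add: finite_act_set card_Un_eq_card_add_card_Diff)
  have card_AB: "card (A <#> insert b C) = card (A <#> C) + card ((A #> b) - (A <#> C))"
    unfolding set_mult_insert_right
    using fin_AC fin_Ab by (rule card_Un_eq_card_add_card_Diff)
  have card_BY: "card (act_set \<phi> (insert b C) Y)
      = card (act_set \<phi> C Y) + card (act_set \<phi> {b} Y - act_set \<phi> C Y)"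
    using act_set_Un[of \<phi> C "{b}" Y] \<open>finite C\<close> \<open>finite Y\<close>
    by (simp add: finite_act_set card_Un_eq_card_add_card_Diff)
  have IH: "card ?K ^ 2 \<le> card (A <#> C) * card (act_set \<phi> C Y) * M"
    using insert.IH[OF C] insert.prems(2) by simp
  have "card (?V - ?K) \<le> card ?V"
    using fin_Ab \<open>finite Y\<close> by (simp add: finite_act_set card_mono)
  also have "\<dots> \<le> M"
    using insert.prems(2) by simp
  finally have new_le_M: "card (?V - ?K) \<le> M" .
  show ?case
    unfolding card_AY card_AB card_BY
    using IH card_act_set_r_coset_Diff_le[OF A C b Y \<open>finite A\<close> \<open>finite Y\<close>] new_le_M
    by (rule cauchy_schwarz_step)
qed

end

theorem mainTheorem4:
  fixes G (structure) and X :: "'b set" and \<phi> :: "'a \<Rightarrow> 'b \<Rightarrow> 'b"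
    and A B :: "'a set" and Y :: "'b set"
  assumes "group G" and "group_action G X \<phi>"
    and "A \<subseteq> carrier G" and "B \<subseteq> carrier G"
    and "finite A" and "finite B" and "A \<noteq> {}" and "B \<noteq> {}"
    and "Y \<subseteq> X" and "finite Y"
  shows "card (act_set \<phi> (A <#> B) Y) ^ 2
           \<le> card (A <#> B) * card (act_set \<phi> B Y)
             * Max ((\<lambda>b. card (act_set \<phi> (A #> b) Y)) ` B)
         \<and> ((\<forall>a\<in>A. \<forall>b\<in>B. a \<otimes> b = b \<otimes> a) \<longrightarrow>
         card (act_set \<phi> (A <#> B) Y) ^ 2
           \<le> card (A <#> B) * card (act_set \<phi> B Y) * card (act_set \<phi> A Y))"
proof (intro conjI impI)
  interpret group_action G X \<phi> by fact
  note bound = card_act_set_set_mult_square_le[OF assms(3,4,9,5,6,10)]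
  show "card (act_set \<phi> (A <#> B) Y) ^ 2
      \<le> card (A <#> B) * card (act_set \<phi> B Y) * Max ((\<lambda>b. card (act_set \<phi> (A #> b) Y)) ` B)"
    using \<open>finite B\<close> by (intro bound Max_ge) auto
  assume commute: "\<forall>a\<in>A. \<forall>b\<in>B. a \<otimes> b = b \<otimes> a"
  have "card (act_set \<phi> (A #> b) Y) = card (act_set \<phi> A Y)" if "b \<in> B" for b
  proof -
    have "A #> b = b <# A"
      using commute that by (intro r_coset_eq_l_coset_if_commute) blast
    moreover have "b \<in> carrier G"
      using that assms(4) by blast
    ultimately show ?thesis
      using card_act_set_l_coset assms(3,9) by simp
  qed
  then show "card (act_set \<phi> (A <#> B) Y) ^ 2
      \<le> card (A <#> B) * card (act_set \<phi> B Y) * card (act_set \<phi> A Y)"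
    by (intro bound) simp
qed

end
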